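(* The language $4\mathrm{MIX}=\{w\in\{a,b,c,d\}^*\mid |w|_a=|w|_b=|w|_c=|w|_d\}$ is not generated by any $1$-DCFG.
   Context: Let $\Sigma$ be a finite alphabet and $1\notin\Sigma$ a separator; $\Sigma_1=\Sigma\cup\{1\}$, $\mathrm{rk}(w)=|w|_1$. For $\mathrm{rk}(u)\ge j$, $u\odot_j v$ is obtained from $u$ by replacing its $j$-th occurrence of $1$ by $v$. Given a finite set $N$ of nonterminals with ranks in $\{0,1\}$, $1$-correct terms are built from nonterminals (their rank), words of $\Sigma^*$ (rank $0$), and $1$ (rank $1$) by $(\alpha\cdot\beta)$ (allowed if $\mathrm{rk}\alpha+\mathrm{rk}\beta\le 1$; rank the sum) and $(\alpha\odot_1\beta)$ (allowed if $\mathrm{rk}\alpha\ge1$, $\mathrm{rk}\alpha+\mathrm{rk}\beta\le 2$; rank $\mathrm{rk}\alpha+\mathrm{rk}\beta-1$). Ground terms (no nonterminals) have values in $\Sigma_1^*$ by interpreting $\cdot$ as concatenation and $\odot_1$ as intercalation. A $1$-DCFG $G=\langle N,\Sigma,P,S\rangle$ has $\mathrm{rk}(S)=0$ and finitely many rules $A\to\alpha$ with $\alpha$ a $1$-correct term of rank $\mathrm{rk}(A)$; derivability $\vdash_G$ is the least reflexive transitive relation such that $A\vdash_G C[B]$ and $(B\to\beta)\in P$ imply $A\vdash_G C[\beta]$ for every context $C$ (term with a single variable leaf); $L(G)$ is the set of values of ground terms $\alpha$ with $S\vdash_G\alpha$. *)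

theory Defs
  imports Main
begin

(* Words over \<Sigma>\<^sub>1 = \<Sigma> \<union> {1}: the separator 1 is represented by None,
   a letter x \<in> \<Sigma> by Some x. *)

fun ins1 :: "'t option list \<Rightarrow> 't option list \<Rightarrow> 't option list" where
  "ins1 [] v = []"
| "ins1 (None # u) v = v @ u"
| "ins1 (Some x # u) v = Some x # ins1 u v"

datatype ('n, 't) dterm =
    NT 'n
  | Word "'t list"
  | One
  | Cat "('n, 't) dterm" "('n, 't) dterm"
  | Ins "('n, 't) dterm" "('n, 't) dterm"

fun trk :: "('n \<Rightarrow> nat) \<Rightarrow> ('n, 't) dterm \<Rightarrow> nat" where
  "trk rk (NT A) = rk A"
| "trk rk (Word w) = 0"
| "trk rk One = 1"
| "trk rk (Cat a b) = trk rk a + trk rk b"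
| "trk rk (Ins a b) = trk rk a + trk rk b - 1"

fun correct1 :: "'n set \<Rightarrow> ('n \<Rightarrow> nat) \<Rightarrow> ('n, 't) dterm \<Rightarrow> bool" where
  "correct1 N rk (NT A) = (A \<in> N)"
| "correct1 N rk (Word w) = True"
| "correct1 N rk One = True"
| "correct1 N rk (Cat a b) =
     (correct1 N rk a \<and> correct1 N rk b \<and> trk rk a + trk rk b \<le> 1)"
| "correct1 N rk (Ins a b) =
     (correct1 N rk a \<and> correct1 N rk b \<and> 1 \<le> trk rk a \<and> trk rk a + trk rk b \<le> 2)"

fun ground :: "('n, 't) dterm \<Rightarrow> bool" where
  "ground (NT A) = False"
| "ground (Word w) = True"
| "ground One = True"
| "ground (Cat a b) = (ground a \<and> ground b)"
| "ground (Ins a b) = (ground a \<and> ground b)"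

fun tval :: "('n, 't) dterm \<Rightarrow> 't option list" where
  "tval (NT A) = []"
| "tval (Word w) = map Some w"
| "tval One = [None]"
| "tval (Cat a b) = tval a @ tval b"
| "tval (Ins a b) = ins1 (tval a) (tval b)"

inductive replace1 :: "'n \<Rightarrow> ('n, 't) dterm \<Rightarrow> ('n, 't) dterm \<Rightarrow> ('n, 't) dterm \<Rightarrow> bool"
  for B \<beta> where
  root: "replace1 B \<beta> (NT B) \<beta>"
| cat_l: "replace1 B \<beta> s s' \<Longrightarrow> replace1 B \<beta> (Cat s t) (Cat s' t)"
| cat_r: "replace1 B \<beta> t t' \<Longrightarrow> replace1 B \<beta> (Cat s t) (Cat s t')"
| ins_l: "replace1 B \<beta> s s' \<Longrightarrow> replace1 B \<beta> (Ins s t) (Ins s' t)"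
| ins_r: "replace1 B \<beta> t t' \<Longrightarrow> replace1 B \<beta> (Ins s t) (Ins s t')"

inductive derives :: "('n \<times> ('n, 't) dterm) set \<Rightarrow> 'n \<Rightarrow> ('n, 't) dterm \<Rightarrow> bool"
  for P where
  refl: "derives P A (NT A)"
| step: "derives P A t \<Longrightarrow> (B, \<beta>) \<in> P \<Longrightarrow> replace1 B \<beta> t t' \<Longrightarrow> derives P A t'"

(* G = <N, \<Sigma>, P, S> is a 1-DCFG, with \<Sigma> = UNIV of the terminal type *)
definition dcfg1 :: "'n set \<Rightarrow> ('n \<Rightarrow> nat) \<Rightarrow> ('n \<times> ('n, 't) dterm) set \<Rightarrow> 'n \<Rightarrow> bool" where
  "dcfg1 N rk P S \<longleftrightarrow>
     finite N \<and> (\<forall>A\<in>N. rk A \<le> 1) \<and> S \<in> N \<and> rk S = 0 \<and> finite P \<and>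
     (\<forall>(A, \<alpha>)\<in>P. A \<in> N \<and> correct1 N rk \<alpha> \<and> trk rk \<alpha> = rk A)"

definition lang :: "('n \<times> ('n, 't) dterm) set \<Rightarrow> 'n \<Rightarrow> 't option list set" where
  "lang P S = {tval t | t. derives P S t \<and> ground t}"

datatype abcd = a | b | c | d

definition count_letter :: "abcd \<Rightarrow> abcd list \<Rightarrow> nat" where
  "count_letter x w = length (filter (\<lambda>y. y = x) w)"

definition MIX4 :: "abcd list set" where
  "MIX4 = {w. count_letter a w = count_letter b w \<and> count_letter b w = count_letter c w
              \<and> count_letter c w = count_letter d w}"

end

theory Submission
  imports Defs "HOL-Library.Multiset" "HOL-Library.Sublist"
begin

(*
  Letter counts are additive under concatenation and under
  intercalation into a word containing the separator, so replacing, inside a derivation of a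
  word of 4MIX, the derivation of one node by another derivation of the same grammar term again
  yields a word of 4MIX. Hence the imbalance |u|_x - |u|_y of the value u of a node depends only
  on the grammar term it derives from, and is bounded by a constant K of the grammar.
  In a derivation tree of b^2M a^M c^2M a^M d^2M with M = 2(4K+1), descending into the heavier
  child reaches a node with between 4K+1 and M letters; its bounded imbalance forces all four
  letters into it. But the value of a node is a factor with at most one hole, i.e. it consists
  of at most two factors of the word, so one of them contains two of b, c, d and with them a
  whole block a^M: too many letters.
*)

definition parikh :: "'t option list \<Rightarrow> 't multiset" where
  "parikh v = mset [x. Some x \<leftarrow> v]"

lemma parikh_simps [simp]:
  "parikh [] = {#}"
  "parikh (None # v) = parikh v"
  "parikh (Some x # v) = add_mset x (parikh v)"
  "parikh (u @ v) = parikh u + parikh v"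
  "parikh (map Some w) = mset w"
  by (simp_all add: parikh_def) (induction w; simp)

lemma size_parikh_le_length: "size (parikh v) \<le> length v"
proof (induction v)
  case (Cons z v)
  then show ?case by (cases z) auto
qed simp

lemma ins1_no_sep: "None \<notin> set u \<Longrightarrow> ins1 u v = u"
  by (induction u v rule: ins1.induct) auto

lemma ins1_append: "ins1 (u @ v) q = (if None \<in> set u then ins1 u q @ v else u @ ins1 v q)"
  by (induction u q rule: ins1.induct) auto

lemma parikh_ins1: "None \<in> set u \<Longrightarrow> parikh (ins1 u v) = parikh u + parikh v"
  by (induction u v rule: ins1.induct) auto

lemma tval_rank:
  assumes "ground h" "correct1 N rk h"
  shows "trk rk h = 0 \<and> (\<exists>x. tval h = map Some x)
       \<or> trk rk h = 1 \<and> (\<exists>x y. tval h = map Some x @ None # map Some y)"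
  using assms
proof (induction h)
  case (Cat s t)
  then consider "trk rk s = 0" "trk rk t = 0" | "trk rk s = 1" "trk rk t = 0"
    | "trk rk s = 0" "trk rk t = 1"
    by fastforce
  then show ?case
  proof cases
    case 1
    with Cat obtain x x' where "tval s = map Some x" "tval t = map Some x'" by auto
    then have "tval (Cat s t) = map Some (x @ x')" by simp
    with 1 show ?thesis by (auto simp del: map_append)
  next
    case 2
    with Cat obtain x y x' where "tval s = map Some x @ None # map Some y" "tval t = map Some x'" by auto
    then have "tval (Cat s t) = map Some x @ None # map Some (y @ x')" by simp
    with 2 show ?thesis by (auto simp del: map_append)
  next
    case 3
    with Cat obtain x x' y' where "tval s = map Some x" "tval t = map Some x' @ None # map Some y'" by auto
    then have "tval (Cat s t) = map Some (x @ x') @ None # map Some y'" by simp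
    with 3 show ?thesis by (auto simp del: map_append)
  qed
next
  case (Ins s t)
  then obtain x y where s: "trk rk s = 1" "tval s = map Some x @ None # map Some y" by fastforce
  then have v: "tval (Ins s t) = map Some x @ tval t @ map Some y"
    by (simp add: ins1_append ins1_no_sep)
  from Ins s(1) consider "trk rk t = 0" "\<exists>x'. tval t = map Some x'"
    | "trk rk t = 1" "\<exists>x' y'. tval t = map Some x' @ None # map Some y'" by fastforce
  then show ?case
  proof cases
    case 1
    then obtain x' where "tval t = map Some x'" by blast
    with v have "tval (Ins s t) = map Some (x @ x' @ y)" by simp
    with 1 s show ?thesis by (auto simp del: map_append)
  next
    case 2
    then obtain x' y' where "tval t = map Some x' @ None # map Some y'" by blast
    with v have "tval (Ins s t) = map Some (x @ x') @ None # map Some (y' @ y)" by simp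
    with 2 s show ?thesis by (auto simp del: map_append)
  qed
qed (auto intro!: exI[of _ "[]"])

lemma parikh_tval_Ins:
  assumes "ground s" "correct1 N rk s" "1 \<le> trk rk s"
  shows "parikh (tval (Ins s t)) = parikh (tval s) + parikh (tval t)"
proof -
  have "None \<in> set (tval s)" using tval_rank[OF assms(1,2)] assms(3) by auto
  then show ?thesis by (simp add: parikh_ins1)
qed

(* As the filled word must be separator-free, v contains at most one separator. *)
definition hole_factor :: "'t option list \<Rightarrow> 't list \<Rightarrow> bool" where
  "hole_factor v w \<longleftrightarrow> (\<exists>q. sublist (ins1 v (map Some q)) (map Some w))"

lemma hole_factor_sublist: "sublist v (map Some w) \<Longrightarrow> hole_factor v w"
  by (metis hole_factor_def ins1_no_sep sublist_map_rightE option.distinct(1) ex_map_conv)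

lemma hole_factor_append:
  assumes "hole_factor (u @ v) w"
  shows "hole_factor u w \<and> hole_factor v w"
proof -
  obtain q where q: "sublist (ins1 (u @ v) (map Some q)) (map Some w)"
    using assms hole_factor_def by blast
  show ?thesis
  proof (cases "None \<in> set u")
    case True
    with q have "sublist (ins1 u (map Some q)) (map Some w)" "sublist v (map Some w)"
      by (auto simp: ins1_append intro: sublist_order.order.trans)
    then show ?thesis using hole_factor_def hole_factor_sublist by blast
  next
    case False
    with q have "sublist u (map Some w)" "sublist (ins1 v (map Some q)) (map Some w)"
      by (auto simp: ins1_append intro: sublist_order.order.trans)
    then show ?thesis using hole_factor_def hole_factor_sublist by blast
  qed
qed

lemma hole_factor_ins1:
  assumes "hole_factor (ins1 (map Some x @ None # map Some y) v) w"
  shows "hole_factor (map Some x @ None # map Some y) w \<and> hole_factor v w"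
proof -
  have frame: "ins1 (map Some x @ v' @ map Some y) q = map Some x @ ins1 v' q @ map Some y" for v' q
    by (simp add: ins1_append ins1_no_sep)
  obtain q where "sublist (ins1 (map Some x @ v @ map Some y) (map Some q)) (map Some w)"
    using assms hole_factor_def by (fastforce simp: ins1_append)
  then have "sublist (map Some x @ ins1 v (map Some q) @ map Some y) (map Some w)"
    by (simp only: frame)
  then have filled: "sublist (ins1 v (map Some q)) (map Some w)"
    by (auto intro: sublist_order.order.trans)
  then obtain q' where "ins1 v (map Some q) = map Some q'"
    using sublist_map_rightE by blast
  then have "ins1 (map Some x @ None # map Some y) (map Some q') = map Some x @ ins1 v (map Some q) @ map Some y"
    by (simp add: ins1_append ins1_no_sep)
  with \<open>sublist (map Some x @ ins1 v (map Some q) @ map Some y) (map Some w)\<close> filled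
  show ?thesis unfolding hole_factor_def by metis
qed

lemma hole_factor_parikh:
  assumes "hole_factor v w"
  obtains x y where "parikh v = mset x + mset y" "sublist x w" "sublist y w"
proof -
  obtain q where q: "sublist (ins1 v (map Some q)) (map Some w)"
    using assms hole_factor_def by blast
  show ?thesis
  proof (cases "None \<in> set v")
    case True
    then obtain u1 u2 where v: "v = u1 @ None # u2" "None \<notin> set u1"
      by (metis split_list_first)
    with q have "sublist (u1 @ map Some q @ u2) (map Some w)"
      by (simp add: ins1_append)
    then have "sublist u1 (map Some w)" "sublist u2 (map Some w)"
      by (metis append.assoc sublist_append_leftI sublist_append_rightI sublist_order.order.trans)+
    then obtain x y where "u1 = map Some x" "sublist x w" "u2 = map Some y" "sublist y w"
      by (metis sublist_map_rightE)
    with v that show ?thesis by simp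
  next
    case False
    with q obtain x where "v = map Some x" "sublist x w"
      by (metis ins1_no_sep sublist_map_rightE)
    with that[of x "[]"] show ?thesis by simp
  qed
qed

fun subterms :: "('n, 't) dterm \<Rightarrow> ('n, 't) dterm set" where
  "subterms (Cat s t) = insert (Cat s t) (subterms s \<union> subterms t)"
| "subterms (Ins s t) = insert (Ins s t) (subterms s \<union> subterms t)"
| "subterms u = {u}"

lemma subterms_refl [simp]: "t \<in> subterms t"
  by (cases t) auto

lemma finite_subterms [simp]: "finite (subterms t)"
  by (induction t) auto

lemma subterms_trans: "u \<in> subterms t \<Longrightarrow> subterms u \<subseteq> subterms t"
  by (induction t) auto

lemma hole_factor_subterm:
  assumes "ground h" "correct1 N rk h" "hole_factor (tval h) w" "h0 \<in> subterms h"
  shows "hole_factor (tval h0) w"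
  using assms
proof (induction h)
  case (Cat s t)
  then show ?case using hole_factor_append[of "tval s" "tval t"] by auto
next
  case (Ins s t)
  then obtain x y where "tval s = map Some x @ None # map Some y"
    using tval_rank[of s N rk] by fastforce
  with Ins show ?case using hole_factor_ins1[of x y "tval t" w] by auto
qed auto

lemma subterm_with_size_between:
  assumes "ground h" "correct1 N rk h" "\<And>z. Word z \<in> subterms h \<Longrightarrow> length z \<le> 2 * k"
    and "k \<le> size (parikh (tval h))"
  shows "\<exists>h0 \<in> subterms h. k \<le> size (parikh (tval h0)) \<and> size (parikh (tval h0)) \<le> 2 * k"
  using assms
proof (induction h)
  case (Cat s t)
  show ?case
  proof (cases "size (parikh (tval (Cat s t))) \<le> 2 * k")
    case False
    then have "k \<le> size (parikh (tval s)) \<or> k \<le> size (parikh (tval t))" by auto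
    with Cat show ?thesis by auto
  qed (use Cat.prems in auto)
next
  case (Ins s t)
  have sum: "size (parikh (tval (Ins s t))) = size (parikh (tval s)) + size (parikh (tval t))"
    using Ins.prems parikh_tval_Ins[of s N rk t] by (simp del: tval.simps)
  show ?case
  proof (cases "size (parikh (tval (Ins s t))) \<le> 2 * k")
    case False
    then have "k \<le> size (parikh (tval s)) \<or> k \<le> size (parikh (tval t))" using sum by linarith
    with Ins show ?thesis by auto
  qed (use Ins.prems in auto)
qed auto

inductive expands :: "('n \<times> ('n, 't) dterm) set \<Rightarrow> ('n, 't) dterm \<Rightarrow> ('n, 't) dterm \<Rightarrow> bool"
  for P where
  NT: "(A, \<alpha>) \<in> P \<Longrightarrow> expands P \<alpha> h \<Longrightarrow> expands P (NT A) h"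
| Word: "expands P (Word x) (Word x)"
| One: "expands P One One"
| Cat: "expands P s hs \<Longrightarrow> expands P t ht \<Longrightarrow> expands P (Cat s t) (Cat hs ht)"
| Ins: "expands P s hs \<Longrightarrow> expands P t ht \<Longrightarrow> expands P (Ins s t) (Ins hs ht)"

inductive_cases expands_WordE: "expands P (Word x) h"
inductive_cases expands_CatE: "expands P (Cat s t) h"
inductive_cases expands_InsE: "expands P (Ins s t) h"

lemma expands_ground: "expands P \<beta> h \<Longrightarrow> ground h"
  by (induction rule: expands.induct) auto

lemma expands_refl: "ground h \<Longrightarrow> expands P h h"
  by (induction h) (auto intro: expands.intros)

lemma expands_correct:
  assumes "\<forall>(A, \<alpha>)\<in>P. correct1 N rk \<alpha> \<and> trk rk \<alpha> = rk A"
  shows "expands P \<beta> h \<Longrightarrow> correct1 N rk \<beta> \<Longrightarrow> correct1 N rk h \<and> trk rk h = trk rk \<beta>"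
  by (induction rule: expands.induct) (use assms in fastforce)+

definition rewrite_step :: "('n \<times> ('n, 't) dterm) set \<Rightarrow> ('n, 't) dterm \<Rightarrow> ('n, 't) dterm \<Rightarrow> bool" where
  "rewrite_step P t t' \<longleftrightarrow> (\<exists>B \<beta>. (B, \<beta>) \<in> P \<and> replace1 B \<beta> t t')"

lemma derives_iff_rewrite_steps: "derives P A t \<longleftrightarrow> (rewrite_step P)\<^sup>*\<^sup>* (NT A) t"
proof
  show "derives P A t \<Longrightarrow> (rewrite_step P)\<^sup>*\<^sup>* (NT A) t"
    by (induction rule: derives.induct) (auto simp: rewrite_step_def intro: rtranclp.rtrancl_into_rtrancl)
  show "(rewrite_step P)\<^sup>*\<^sup>* (NT A) t \<Longrightarrow> derives P A t"
    by (induction rule: rtranclp_induct) (auto simp: rewrite_step_def intro: derives.intros)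
qed

lemma rtranclp_map:
  assumes "\<And>x y. R x y \<Longrightarrow> R (f x) (f y)"
  shows "R\<^sup>*\<^sup>* x y \<Longrightarrow> R\<^sup>*\<^sup>* (f x) (f y)"
  by (induction rule: rtranclp_induct) (auto intro: rtranclp.rtrancl_into_rtrancl assms)

lemma expands_rewrite_steps: "expands P \<beta> h \<Longrightarrow> (rewrite_step P)\<^sup>*\<^sup>* \<beta> h"
proof (induction rule: expands.induct)
  case (NT A \<alpha> h)
  then have "rewrite_step P (NT A) \<alpha>"
    by (auto simp: rewrite_step_def intro: replace1.root)
  then show ?case using NT.IH by (rule converse_rtranclp_into_rtranclp)
next
  case (Cat s hs t ht)
  have "(rewrite_step P)\<^sup>*\<^sup>* (Cat s t) (Cat hs t)" "(rewrite_step P)\<^sup>*\<^sup>* (Cat hs t) (Cat hs ht)"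
    by (rule rtranclp_map[OF _ Cat.IH(1)] rtranclp_map[OF _ Cat.IH(2)];
        auto simp: rewrite_step_def intro: replace1.intros)+
  then show ?case by (rule rtranclp_trans)
next
  case (Ins s hs t ht)
  have "(rewrite_step P)\<^sup>*\<^sup>* (Ins s t) (Ins hs t)" "(rewrite_step P)\<^sup>*\<^sup>* (Ins hs t) (Ins hs ht)"
    by (rule rtranclp_map[OF _ Ins.IH(1)] rtranclp_map[OF _ Ins.IH(2)];
        auto simp: rewrite_step_def intro: replace1.intros)+
  then show ?case by (rule rtranclp_trans)
qed auto

lemma replace1_expands:
  "replace1 B \<beta> t t' \<Longrightarrow> (B, \<beta>) \<in> P \<Longrightarrow> expands P t' g \<Longrightarrow> expands P t g"
  by (induction arbitrary: g rule: replace1.induct)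
     (auto elim!: expands_CatE expands_InsE intro: expands.intros)

lemma rewrite_steps_expands: "(rewrite_step P)\<^sup>*\<^sup>* t t' \<Longrightarrow> expands P t' g \<Longrightarrow> expands P t g"
  by (induction rule: rtranclp_induct) (auto simp: rewrite_step_def intro: replace1_expands)

lemma lang_eq_expansions: "lang P S = tval ` {h. expands P (NT S) h}"
proof
  show "lang P S \<subseteq> tval ` {h. expands P (NT S) h}"
    unfolding lang_def derives_iff_rewrite_steps by (blast intro: rewrite_steps_expands expands_refl)
  show "tval ` {h. expands P (NT S) h} \<subseteq> lang P S"
    unfolding lang_def derives_iff_rewrite_steps by (auto intro: expands_rewrite_steps expands_ground)
qed

definition imbalance :: "'t multiset \<Rightarrow> 't \<Rightarrow> 't \<Rightarrow> int" where
  "imbalance M x y = int (count M x) - int (count M y)"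

lemma imbalance_union [simp]: "imbalance (M + M') x y = imbalance M x y + imbalance M' x y"
  by (simp add: imbalance_def)

lemma abs_imbalance_le_size: "\<bar>imbalance M x y\<bar> \<le> int (size M)"
  using count_le_size[of M x] count_le_size[of M y] by (simp add: imbalance_def)

definition imbalance_determined :: "('n \<times> ('n, 't) dterm) set \<Rightarrow> ('n, 't) dterm \<Rightarrow> bool" where
  "imbalance_determined P \<beta> \<longleftrightarrow>
     (\<forall>h h'. expands P \<beta> h \<longrightarrow> expands P \<beta> h' \<longrightarrow>
        imbalance (parikh (tval h)) = imbalance (parikh (tval h')))"

lemma imbalance_determined_NT:
  "imbalance_determined P (NT A) \<Longrightarrow> (A, \<alpha>) \<in> P \<Longrightarrow> imbalance_determined P \<alpha>"
  unfolding imbalance_determined_def by (meson expands.NT)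

lemma imbalance_determined_args:
  assumes det: "imbalance_determined P \<beta>" and "expands P s hs" "expands P t ht"
    and comb: "\<And>hs ht. expands P s hs \<Longrightarrow> expands P t ht \<Longrightarrow>
       expands P \<beta> (f hs ht) \<and> parikh (tval (f hs ht)) = parikh (tval hs) + parikh (tval ht)"
  shows "imbalance_determined P s \<and> imbalance_determined P t"
proof -
  have "imbalance (parikh (tval hs')) x y + imbalance (parikh (tval ht')) x y =
        imbalance (parikh (tval hs'')) x y + imbalance (parikh (tval ht'')) x y"
    if "expands P s hs'" "expands P t ht'" "expands P s hs''" "expands P t ht''" for hs' ht' hs'' ht'' x y
    using det comb[OF that(1,2)] comb[OF that(3,4)] unfolding imbalance_determined_def
    by (metis imbalance_union)
  with assms(2,3) show ?thesis
    unfolding imbalance_determined_def by (fastforce intro!: ext)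
qed

definition grammar_terms :: "('n \<times> ('n, 't) dterm) set \<Rightarrow> ('n, 't) dterm set" where
  "grammar_terms P = (\<Union>(A, \<alpha>)\<in>P. insert (NT A) (subterms \<alpha>))"

lemma finite_grammar_terms: "finite P \<Longrightarrow> finite (grammar_terms P)"
  by (auto simp: grammar_terms_def)

lemma grammar_terms_subterm: "\<beta> \<in> grammar_terms P \<Longrightarrow> \<beta>' \<in> subterms \<beta> \<Longrightarrow> \<beta>' \<in> grammar_terms P"
  unfolding grammar_terms_def using subterms_trans by fastforce

(* For grammar terms without expansion the chosen term is junk; it only enlarges the maximum. *)
definition witness_bound :: "('n \<times> ('n, 't) dterm) set \<Rightarrow> nat" where
  "witness_bound P = Max ((\<lambda>\<beta>. length (tval (SOME h. expands P \<beta> h))) ` grammar_terms P)"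

lemma abs_imbalance_le_witness_bound:
  assumes "finite P" "\<beta> \<in> grammar_terms P" "imbalance_determined P \<beta>" "expands P \<beta> h"
  shows "\<bar>imbalance (parikh (tval h)) x y\<bar> \<le> int (witness_bound P)"
proof -
  define h' where "h' = (SOME h. expands P \<beta> h)"
  have "expands P \<beta> h'" unfolding h'_def using assms(4) by (rule someI)
  with assms(3,4) have "imbalance (parikh (tval h)) = imbalance (parikh (tval h'))"
    unfolding imbalance_determined_def by blast
  moreover note size_parikh_le_length[of "tval h'"]
  moreover have "length (tval h') \<le> witness_bound P"
    unfolding witness_bound_def h'_def using assms(1,2) by (auto intro: Max_ge finite_grammar_terms)
  ultimately show ?thesis using abs_imbalance_le_size[of "parikh (tval h')" x y] by simp
qed

lemma length_le_witness_bound: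
  assumes "finite P" "Word z \<in> grammar_terms P"
  shows "length z \<le> witness_bound P"
proof -
  have "(SOME h. expands P (Word z) h) = Word z"
    using someI[of "expands P (Word z)", OF expands.Word] by (auto elim: expands_WordE)
  then show ?thesis
    unfolding witness_bound_def using assms by (force intro: Max_ge finite_grammar_terms)
qed

lemma expansion_subterm_determined:
  assumes rules: "\<forall>(A, \<alpha>)\<in>P. correct1 N rk \<alpha> \<and> trk rk \<alpha> = rk A"
  shows "expands P \<beta> h \<Longrightarrow> \<beta> \<in> grammar_terms P \<Longrightarrow> correct1 N rk \<beta> \<Longrightarrow>
    imbalance_determined P \<beta> \<Longrightarrow> h0 \<in> subterms h \<Longrightarrow>
    \<exists>\<beta>0 \<in> grammar_terms P. expands P \<beta>0 h0 \<and> imbalance_determined P \<beta>0"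
proof (induction arbitrary: h0 rule: expands.induct)
  case (NT A \<alpha> h)
  have "\<alpha> \<in> grammar_terms P" using NT.hyps(1) by (force simp: grammar_terms_def)
  with NT rules show ?case using imbalance_determined_NT by fastforce
next
  case (Cat s hs t ht)
  have "imbalance_determined P s \<and> imbalance_determined P t"
    using Cat.prems(3) Cat.hyps
    by (rule imbalance_determined_args[where f = Cat]) (auto intro: expands.Cat)
  moreover have "s \<in> grammar_terms P" "t \<in> grammar_terms P"
    using Cat.prems(1) grammar_terms_subterm by fastforce+
  ultimately show ?case using Cat by (auto intro: expands.Cat)
next
  case (Ins s hs t ht)
  have sum: "parikh (tval (Ins hs' ht')) = parikh (tval hs') + parikh (tval ht')"
    if "expands P s hs'" for hs' ht'
    using Ins.prems(2) expands_correct[OF rules that] expands_ground[OF that]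
    by (intro parikh_tval_Ins) auto
  have "imbalance_determined P s \<and> imbalance_determined P t"
    using Ins.prems(3) Ins.hyps
    by (rule imbalance_determined_args[where f = Ins]) (blast intro: expands.Ins sum)
  moreover have "s \<in> grammar_terms P" "t \<in> grammar_terms P"
    using Ins.prems(1) grammar_terms_subterm by fastforce+
  ultimately show ?case using Ins by (auto intro: expands.Ins)
qed (auto intro: expands.intros)

lemma expansion_word_in_grammar_terms:
  "expands P \<beta> h \<Longrightarrow> Word z \<in> subterms h \<Longrightarrow> Word z \<in> subterms \<beta> \<or> Word z \<in> grammar_terms P"
proof (induction rule: expands.induct)
  case (NT A \<alpha> h)
  then show ?case using grammar_terms_subterm[of \<alpha> P] by (force simp: grammar_terms_def)
qed auto

lemma expansion_word_bounded:
  assumes "finite P" "expands P (NT S) h" "Word z \<in> subterms h"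
  shows "length z \<le> witness_bound P"
  using expansion_word_in_grammar_terms[OF assms(2,3)] length_le_witness_bound[OF assms(1)] by simp

lemma count_mset_eq_count_letter: "count (mset w) x = count_letter x w"
  by (induction w) (auto simp: count_letter_def)

lemma imbalance_MIX4: "w \<in> MIX4 \<Longrightarrow> imbalance (mset w) x y = 0"
  by (cases x; cases y) (auto simp: imbalance_def count_mset_eq_count_letter MIX4_def)

lemma size_abcd_multiset: "size M = count M a + count M b + count M c + count M d"
proof (induction M)
  case (add x M)
  then show ?case by (cases x) auto
qed simp

lemma letter_in_unbalanced_multiset:
  fixes M :: "abcd multiset"
  assumes "\<And>x y. \<bar>imbalance M x y\<bar> \<le> int K" "4 * K < size M"
  shows "z \<in># M"
proof (rule ccontr)
  assume "z \<notin># M"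
  then have count: "count M x \<le> K" for x
    using assms(1)[of x z] by (simp add: imbalance_def not_in_iff)
  have "size M \<le> 4 * K"
    using size_abcd_multiset[of M] count[of a] count[of b] count[of c] count[of d] by linarith
  with assms(2) show False by simp
qed

definition separated_word :: "nat \<Rightarrow> abcd list" where
  "separated_word M = replicate (2*M) b @ replicate M a @ replicate (2*M) c @ replicate M a @ replicate (2*M) d"

lemma separated_word_in_MIX4: "separated_word M \<in> MIX4"
  unfolding MIX4_def count_letter_def separated_word_def by (simp add: filter_replicate)

lemma nth_separated_word:
  "n < 8 * M \<Longrightarrow> separated_word M ! n =
     (if n < 2*M then b else if n < 3*M then a else if n < 5*M then c else if n < 6*M then a else d)"
  unfolding separated_word_def by (auto simp: nth_append)

lemma sublist_separated_word_long:
  assumes "sublist x (separated_word M)" "u \<in> set x" "v \<in> set x" "u \<noteq> a" "v \<noteq> a" "u \<noteq> v"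
  shows "M < length x"
proof -
  obtain p r where w: "separated_word M = p @ x @ r" using assms(1) by (auto simp: sublist_def)
  obtain i j where ij: "i < length x" "x ! i = u" "j < length x" "x ! j = v"
    using assms(2,3) by (auto simp: in_set_conv_nth)
  have "length p + length x \<le> 8 * M"
    using arg_cong[OF w, of length] by (simp add: separated_word_def)
  moreover have "separated_word M ! (length p + i) = u" "separated_word M ! (length p + j) = v"
    using w ij by (simp_all add: nth_append)
  ultimately show ?thesis
    using nth_separated_word[of "length p + i" M] nth_separated_word[of "length p + j" M] ij assms(4-6)
    by (auto split: if_splits)
qed

lemma hole_factor_separated_word_long:
  assumes "hole_factor v (separated_word M)" "b \<in># parikh v" "c \<in># parikh v" "d \<in># parikh v"
  shows "M < size (parikh v)"
proof -
  obtain x y where xy: "parikh v = mset x + mset y" "sublist x (separated_word M)" "sublist y (separated_word M)"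
    using assms(1) by (rule hole_factor_parikh)
  have "M < length x" if "u \<in> set x" "u' \<in> set x" "u \<noteq> a" "u' \<noteq> a" "u \<noteq> u'" for u u'
    using sublist_separated_word_long[OF xy(2) that] .
  moreover have "M < length y" if "u \<in> set y" "u' \<in> set y" "u \<noteq> a" "u' \<noteq> a" "u \<noteq> u'" for u u'
    using sublist_separated_word_long[OF xy(3) that] .
  moreover have "b \<in> set x \<or> b \<in> set y" "c \<in> set x \<or> c \<in> set y" "d \<in> set x \<or> d \<in> set y"
    using assms(2-4) xy(1) by auto
  ultimately have "M < length x \<or> M < length y" by blast
  with xy(1) show ?thesis by auto
qed

lemma imbalance_determined_start:
  assumes "lang P S \<subseteq> map Some ` MIX4"
  shows "imbalance_determined P (NT S)"
proof -
  have "imbalance (parikh (tval h)) = (\<lambda>x y. 0)" if "expands P (NT S) h" for h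
  proof -
    have "tval h \<in> map Some ` MIX4" using that assms by (auto simp: lang_eq_expansions)
    then show ?thesis by (auto intro!: ext imbalance_MIX4)
  qed
  then show ?thesis unfolding imbalance_determined_def by simp
qed

lemma MIX4_expansion_subterm_imbalance_bounded:
  assumes "finite P" and rules: "\<forall>(A, \<alpha>)\<in>P. correct1 N rk \<alpha> \<and> trk rk \<alpha> = rk A"
    and "S \<in> N" "lang P S \<subseteq> map Some ` MIX4"
    and h: "expands P (NT S) h" and "h0 \<in> subterms h"
  shows "\<bar>imbalance (parikh (tval h0)) x y\<bar> \<le> int (witness_bound P)"
proof -
  from h obtain \<alpha> where "(S, \<alpha>) \<in> P" by (blast elim: expands.cases)
  then have S: "NT S \<in> grammar_terms P" unfolding grammar_terms_def by blast
  obtain \<beta>0 where "\<beta>0 \<in> grammar_terms P" "imbalance_determined P \<beta>0" "expands P \<beta>0 h0"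
    using expansion_subterm_determined[OF rules h S _ imbalance_determined_start[OF assms(4)] assms(6)] assms(3)
    by auto
  then show ?thesis by (rule abs_imbalance_le_witness_bound[OF \<open>finite P\<close>])
qed

theorem theorem5:
  fixes N :: "'n set" and rk :: "'n \<Rightarrow> nat"
    and P :: "('n \<times> ('n, abcd) dterm) set" and S :: 'n
  assumes "dcfg1 N rk P S"
  shows "lang P S \<noteq> map Some ` MIX4"
proof
  assume L: "lang P S = map Some ` MIX4"
  have fin: "finite P" and rules: "\<forall>(A, \<alpha>)\<in>P. correct1 N rk \<alpha> \<and> trk rk \<alpha> = rk A"
    and "S \<in> N" using assms unfolding dcfg1_def by auto
  define K where "K = witness_bound P"
  define M where "M = 2 * (4 * K + 1)"
  have "map Some (separated_word M) \<in> lang P S" using L separated_word_in_MIX4 by blast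
  then obtain h where h: "expands P (NT S) h" "tval h = map Some (separated_word M)"
    unfolding lang_eq_expansions by (auto simp: image_iff)
  have ground: "ground h" and correct: "correct1 N rk h"
    using expands_ground[OF h(1)] expands_correct[OF rules h(1)] \<open>S \<in> N\<close> by simp_all
  have words: "length z \<le> 2 * (4 * K + 1)" if "Word z \<in> subterms h" for z
    using expansion_word_bounded[OF fin h(1) that] unfolding K_def by simp
  have "size (parikh (tval h)) = length (separated_word M)" by (simp add: h(2))
  then have "4 * K + 1 \<le> size (parikh (tval h))" by (simp add: M_def separated_word_def)
  then obtain h0 where h0: "h0 \<in> subterms h" "4 * K + 1 \<le> size (parikh (tval h0))"
    "size (parikh (tval h0)) \<le> M"
    unfolding M_def by (meson subterm_with_size_between[OF ground correct words])
  have "\<bar>imbalance (parikh (tval h0)) x y\<bar> \<le> int K" for x y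
    using MIX4_expansion_subterm_imbalance_bounded[OF fin rules \<open>S \<in> N\<close> _ h(1) h0(1)] L
    unfolding K_def by simp
  then have "z \<in># parikh (tval h0)" for z using h0(2) by (intro letter_in_unbalanced_multiset) auto
  moreover have "hole_factor (tval h0) (separated_word M)"
    using hole_factor_subterm[OF ground correct _ h0(1)] h(2)
      hole_factor_sublist[OF sublist_order.order.refl] by metis
  ultimately have "M < size (parikh (tval h0))" using hole_factor_separated_word_long by blast
  with h0(3) show False by simp
qed

end
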